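(* Let $X$ be a topological space, $(Z,d)$ a bounded metric space, $F:X\to 2^Z$ a lower quasicontinuous set-valued mapping, and $z_0\in Z$. Then the mapping $\phi:X\to\mathbb R$, $\phi(x)=\sup\{d(z_0,z):z\in F(x)\}$, is cliquish.
   Context: $2^Z$ is the set of nonempty subsets of $Z$. $F:X\to 2^Z$ is lower quasicontinuous if for each $x_0\in X$, each neighborhood $U$ of $x_0$ and each open $W\subset Z$ with $F(x_0)\cap W\ne\emptyset$, there is an open $O$ with $\emptyset\ne O\subset U$ and $F(x)\cap W\ne\emptyset$ for all $x\in O$. A mapping $g$ from $X$ into a metric space is cliquish at $a$ if for each $\varepsilon>0$ and each neighborhood $U$ of $a$ there is an open $O$ with $\emptyset\ne O\subset U$ and $\mathrm{diam}(g(O))\le\varepsilon$; cliquish means cliquish at every point. $\mathrm{diam}(W)=\sup\{d(u,v):u,v\in W\}$. *)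

theory Defs
  imports "HOL-Analysis.Analysis"
begin

definition nbhd :: "'a::topological_space set \<Rightarrow> 'a \<Rightarrow> bool" where
  "nbhd U x \<longleftrightarrow> (\<exists>V. open V \<and> x \<in> V \<and> V \<subseteq> U)"

definition lower_quasicontinuous ::
  "('a::topological_space \<Rightarrow> 'b::topological_space set) \<Rightarrow> bool" where
  "lower_quasicontinuous F \<longleftrightarrow>
     (\<forall>x0 U W. nbhd U x0 \<and> open W \<and> F x0 \<inter> W \<noteq> {} \<longrightarrow>
        (\<exists>Ob. open Ob \<and> Ob \<noteq> {} \<and> Ob \<subseteq> U \<and> (\<forall>x\<in>Ob. F x \<inter> W \<noteq> {})))"

definition cliquish_at :: "('a::topological_space \<Rightarrow> 'b::metric_space) \<Rightarrow> 'a \<Rightarrow> bool" where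
  "cliquish_at g a \<longleftrightarrow>
     (\<forall>\<epsilon>>0. \<forall>U. nbhd U a \<longrightarrow>
        (\<exists>Ob. open Ob \<and> Ob \<noteq> {} \<and> Ob \<subseteq> U \<and> diameter (g ` Ob) \<le> \<epsilon>))"

definition cliquish :: "('a::topological_space \<Rightarrow> 'b::metric_space) \<Rightarrow> bool" where
  "cliquish g \<longleftrightarrow> (\<forall>a. cliquish_at g a)"

end

theory Submission
  imports Defs
begin

(*
  Let phi x = sup {d(z0,z) : z \<in> F x}.  The proof splits into two independent facts.

  (1) phi is "lower quasi-semicontinuous": for every x0, every neighbourhood U of x0 and
      every e > 0 there is a nonempty open O \<subseteq> U on which phi > phi x0 - e.  Indeed, pick
      z \<in> F x0 with d(z0,z) > phi x0 - e/2; lower quasicontinuity of F applied to the ball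
      B(z, e/2) gives O on which every F x meets that ball, so phi x > phi x0 - e there.

  (2) Every real function that is bounded above and lower quasi-semicontinuous is
      cliquish: in an open V \<ni> a pick x0 with phi x0 within e/2 of S = sup phi(V); on the
      resulting O \<subseteq> V all values lie in [S - e, S], so diam phi(O) \<le> e.
*)

definition lower_quasi_semicontinuous :: "('a::topological_space \<Rightarrow> real) \<Rightarrow> bool" where
  "lower_quasi_semicontinuous g \<longleftrightarrow>
     (\<forall>x0 U \<epsilon>. nbhd U x0 \<and> \<epsilon> > 0 \<longrightarrow>
        (\<exists>Ob. open Ob \<and> Ob \<noteq> {} \<and> Ob \<subseteq> U \<and> (\<forall>x\<in>Ob. g x0 - \<epsilon> < g x)))"

lemma lower_quasi_semicontinuous_sup_dist:
  fixes F :: "'a::topological_space \<Rightarrow> 'b::metric_space set" and z0 :: 'b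
  assumes bounded_values: "\<And>x. bounded (F x)"
    and nonempty: "\<And>x. F x \<noteq> {}"
    and lqc: "lower_quasicontinuous F"
  shows "lower_quasi_semicontinuous (\<lambda>x. Sup ((\<lambda>z. dist z0 z) ` F x))"
  unfolding lower_quasi_semicontinuous_def
proof (intro allI impI, elim conjE)
  fix x0 :: 'a and U and \<epsilon> :: real
  assume nbhd: "nbhd U x0" and pos: "\<epsilon> > 0"
  define \<phi> where "\<phi> x = Sup ((\<lambda>z. dist z0 z) ` F x)" for x
  have dist_le_\<phi>: "dist z0 w \<le> \<phi> x" if "w \<in> F x" for x w
  proof -
    have "bdd_above ((\<lambda>z. dist z0 z) ` F x)"
      using bounded_values[of x] unfolding bounded_any_center[where a = z0]
      by (auto intro: bdd_aboveI2)
    then show ?thesis unfolding \<phi>_def using that by (auto intro: cSup_upper)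
  qed
  obtain z where z: "z \<in> F x0" "\<phi> x0 - \<epsilon>/2 < dist z0 z"
    using less_cSupE[of "\<phi> x0 - \<epsilon>/2" "(\<lambda>z. dist z0 z) ` F x0"] pos nonempty
    unfolding \<phi>_def by auto
  have "F x0 \<inter> ball z (\<epsilon>/2) \<noteq> {}"
    using z pos by auto
  then obtain Ob where Ob: "open Ob" "Ob \<noteq> {}" "Ob \<subseteq> U"
      and meets: "\<forall>x\<in>Ob. F x \<inter> ball z (\<epsilon>/2) \<noteq> {}"
    using lqc nbhd unfolding lower_quasicontinuous_def by (meson open_ball)
  have "\<phi> x0 - \<epsilon> < \<phi> x" if "x \<in> Ob" for x
  proof -
    have "F x \<inter> ball z (\<epsilon>/2) \<noteq> {}"
      using meets that by blast
    then obtain w where w: "w \<in> F x" "dist z w < \<epsilon>/2"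
      by auto
    have "dist z0 z \<le> dist z0 w + dist z w"
      by (metis dist_commute dist_triangle)
    then show ?thesis
      using dist_le_\<phi>[OF w(1)] w(2) z(2) by linarith
  qed
  then show "\<exists>Ob. open Ob \<and> Ob \<noteq> {} \<and> Ob \<subseteq> U \<and>
      (\<forall>x\<in>Ob. \<phi> x0 - \<epsilon> < \<phi> x)"
    using Ob by blast
qed

text \<open>A lower quasi-semicontinuous real function that is bounded above is cliquish:
  near the supremum over a neighbourhood its values are squeezed into a short interval.\<close>
lemma cliquish_if_lower_quasi_semicontinuous:
  fixes g :: "'a::topological_space \<Rightarrow> real"
  assumes bdd: "bdd_above (range g)"
    and lqsc: "lower_quasi_semicontinuous g"
  shows "cliquish g"
  unfolding cliquish_def cliquish_at_def
proof (intro allI impI)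
  fix a :: 'a and U and \<epsilon> :: real
  assume pos: "\<epsilon> > 0" and "nbhd U a"
  then obtain V where V: "open V" "a \<in> V" "V \<subseteq> U"
    unfolding nbhd_def by blast
  define S where "S = Sup (g ` V)"
  have le_S: "g x \<le> S" if "x \<in> V" for x
  proof -
    have "bdd_above (g ` V)"
      using bdd by (rule bdd_above_mono) blast
    then show ?thesis
      unfolding S_def by (rule cSUP_upper[OF that])
  qed
  obtain x0 where x0: "x0 \<in> V" "S - \<epsilon>/2 < g x0"
    using less_cSupE[of "S - \<epsilon>/2" "g ` V"] pos V(2) unfolding S_def by auto
  have "nbhd V x0"
    unfolding nbhd_def using V(1) x0(1) by blast
  then obtain Ob where Ob: "open Ob" "Ob \<noteq> {}" "Ob \<subseteq> V"
      and above: "\<forall>x\<in>Ob. g x0 - \<epsilon>/2 < g x"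
    using lqsc pos unfolding lower_quasi_semicontinuous_def
    by (metis half_gt_zero)
  have "g ` Ob \<subseteq> {S - \<epsilon>..S}"
    using above x0(2) le_S Ob(3) by fastforce
  then have "diameter (g ` Ob) \<le> diameter {S - \<epsilon>..S}"
    by (rule diameter_subset) (rule bounded_closed_interval)
  also have "\<dots> = \<epsilon>"
    using pos by simp
  finally show "\<exists>Ob. open Ob \<and> Ob \<noteq> {} \<and> Ob \<subseteq> U \<and> diameter (g ` Ob) \<le> \<epsilon>"
    using Ob V(3) by blast
qed

theorem lemma3p1:
  fixes F :: "'a::topological_space \<Rightarrow> 'b::metric_space set"
    and z0 :: 'b
  assumes "bounded (UNIV :: 'b set)"
    and "\<And>x. F x \<noteq> {}"
    and "lower_quasicontinuous F"
  shows "cliquish (\<lambda>x. Sup ((\<lambda>z. dist z0 z) ` F x))"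
proof (rule cliquish_if_lower_quasi_semicontinuous)
  obtain B where B: "\<And>z. dist z0 z \<le> B"
    using assms(1) unfolding bounded_any_center[where a = z0] by blast
  show "bdd_above (range (\<lambda>x. Sup ((\<lambda>z. dist z0 z) ` F x)))"
    using assms(2) B by (intro bdd_aboveI2 cSUP_least) auto
  show "lower_quasi_semicontinuous (\<lambda>x. Sup ((\<lambda>z. dist z0 z) ` F x))"
    using assms(1,2,3) bounded_subset
    by (intro lower_quasi_semicontinuous_sup_dist) auto
qed

end
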